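(* Let $a,b$ be positive integers and $c$ an integer with $-b<c<a$, let $d=\gcd(a,b,c)$, $a'=a/d$, $b'=b/d$, $c'=c/d$, $d'=\gcd(a',b')$, and let $k\in\mathbb{N}\cup\{\infty\}$ with $k\geq d'-1$. If $S$ is a basis (generating set as a $T_{\mathbb{Z}}$-ideal) for $T_{\mathbb{Z}}(E_{(-b',c',a')}^{(\infty,k,\infty)})$, then the $T_{\mathbb{Z}}$-ideal $T_{\mathbb{Z}}(E_{(-b,c,a)}^{(\infty,k,\infty)})$ is generated by $S'\cup N$, where $S'=\{\Psi_d(\Phi_d(f)) : f\in S\}$ and $N=\{x_i^m\in X: m\notin d\mathbb{Z}\}$.
   Context: $F$ is a field of characteristic zero; $E$ is the Grassmann algebra of an infinite-dimensional $F$-vector space with basis $e_1,e_2,\dots$. For pairwise distinct integers $r_1,\dots,r_n$ and $v_j\in\mathbb{N}\cup\{\infty\}$, $E_{(r_1,\dots,r_n)}^{(v_1,\dots,v_n)}$ is the $\mathbb{Z}$-grading obtained by splitting $\{e_i\}$ into $n$ disjoint sets of cardinalities $v_1,\dots,v_n$, giving elements of the $j$-th set degree $r_j$ and monomials the sum of degrees. For a group $G$, $F\langle X|G\rangle$ is the free associative algebra on variables $x_i^g$ of degree $g$; $X$ is the set of variables; $T_G(A)$ is the ideal of graded identities of a $G$-graded algebra $A$; a $T_G$-ideal is an ideal invariant under degree-preserving endomorphisms. $\Phi_d:F\langle X|\mathbb{Z}\rangle\to F\langle X|d\mathbb{Z}\rangle$ is the isomorphism $x_i^n\mapsto x_i^{dn}$,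 and $\Psi_d:F\langle X|d\mathbb{Z}\rangle\to F\langle X|\mathbb{Z}\rangle$ is the homomorphism $x_i^{dn}\mapsto x_i^{dn}$. *)

theory Defs
  imports Main "HOL-Library.Extended_Nat"
begin

text \<open>A variable x_i^g is encoded as the pair (i, g) :: nat \<times> int (index i, degree g).
  Elements of F<X|Z> are functions from words (monomials) to coefficients; the
  elements of the free algebra are those with finite support.\<close>

type_synonym gvar = "nat \<times> int"
type_synonym 'a fpoly = "gvar list \<Rightarrow> 'a"

definition fsupp :: "'a::zero fpoly \<Rightarrow> gvar list set" where
  "fsupp f = {w. f w \<noteq> 0}"

definition ffin :: "'a::zero fpoly \<Rightarrow> bool" where
  "ffin f \<longleftrightarrow> finite (fsupp f)"

definition fmono :: "gvar list \<Rightarrow> 'a::{zero,one} fpoly" where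
  "fmono w = (\<lambda>u. if u = w then 1 else 0)"

definition fvar :: "gvar \<Rightarrow> 'a::{zero,one} fpoly" where
  "fvar x = fmono [x]"

definition fadd :: "'a::plus fpoly \<Rightarrow> 'a fpoly \<Rightarrow> 'a fpoly" where
  "fadd p q = (\<lambda>w. p w + q w)"

definition fsmult :: "'a::times \<Rightarrow> 'a fpoly \<Rightarrow> 'a fpoly" where
  "fsmult c p = (\<lambda>w. c * p w)"

definition fmult :: "'a::comm_semiring_1 fpoly \<Rightarrow> 'a fpoly \<Rightarrow> 'a fpoly" where
  "fmult p q = (\<lambda>w. \<Sum>i\<le>length w. p (take i w) * q (drop i w))"

definition fwordprod :: "(gvar \<Rightarrow> 'a::comm_semiring_1 fpoly) \<Rightarrow> gvar list \<Rightarrow> 'a fpoly" where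
  "fwordprod s w = foldr (\<lambda>x acc. fmult (s x) acc) w (fmono [])"

definition fsubst :: "(gvar \<Rightarrow> 'a::comm_semiring_1 fpoly) \<Rightarrow> 'a fpoly \<Rightarrow> 'a fpoly" where
  "fsubst s f = (\<lambda>u. \<Sum>w\<in>fsupp f. f w * fwordprod s w u)"

definition fhomog :: "int \<Rightarrow> 'a::zero fpoly \<Rightarrow> bool" where
  "fhomog g p \<longleftrightarrow> (\<forall>w. p w \<noteq> 0 \<longrightarrow> sum_list (map snd w) = g)"

definition graded_endo_subst :: "(gvar \<Rightarrow> 'a::comm_semiring_1 fpoly) \<Rightarrow> bool" where
  "graded_endo_subst s \<longleftrightarrow> (\<forall>x. ffin (s x) \<and> fhomog (snd x) (s x))"

definition is_ideal :: "'a::comm_semiring_1 fpoly set \<Rightarrow> bool" where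
  "is_ideal I \<longleftrightarrow> I \<subseteq> {f. ffin f} \<and> (\<lambda>_. 0) \<in> I
     \<and> (\<forall>p\<in>I. \<forall>q\<in>I. fadd p q \<in> I)
     \<and> (\<forall>p\<in>I. \<forall>c. fsmult c p \<in> I)
     \<and> (\<forall>p\<in>I. \<forall>q. ffin q \<longrightarrow> fmult q p \<in> I \<and> fmult p q \<in> I)"

definition is_TZ_ideal :: "'a::comm_semiring_1 fpoly set \<Rightarrow> bool" where
  "is_TZ_ideal I \<longleftrightarrow> is_ideal I \<and> (\<forall>s. graded_endo_subst s \<longrightarrow> (\<forall>f\<in>I. fsubst s f \<in> I))"

definition TZ_gen :: "'a::comm_semiring_1 fpoly set \<Rightarrow> 'a fpoly set" where
  "TZ_gen S = \<Inter>{I. is_TZ_ideal I \<and> S \<subseteq> I}"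

text \<open>An element of E is a function assigning to each finite set A = {i1 < ... < ik}
  the coefficient of the monomial e_i1 ... e_ik; only finitely many nonzero coefficients,
  and only on finite sets.\<close>

type_synonym 'a grass = "nat set \<Rightarrow> 'a"

definition grass_elem :: "'a::zero grass \<Rightarrow> bool" where
  "grass_elem x \<longleftrightarrow> finite {A. x A \<noteq> 0} \<and> (\<forall>A. x A \<noteq> 0 \<longrightarrow> finite A)"

definition gsign :: "nat set \<Rightarrow> nat set \<Rightarrow> 'a::comm_ring_1" where
  "gsign A B = (-1) ^ card {(p, q). p \<in> A \<and> q \<in> B \<and> q < p}"

text \<open>(e_A)(e_B) = sign(A,B) e_(A \<union> B) if A, B are disjoint, and 0 otherwise.\<close>
definition gmult :: "'a::comm_ring_1 grass \<Rightarrow> 'a grass \<Rightarrow> 'a grass" where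
  "gmult x y = (\<lambda>C. if finite C then (\<Sum>A\<in>Pow C. gsign A (C - A) * x A * y (C - A)) else 0)"

definition gone :: "'a::{zero,one} grass" where
  "gone = (\<lambda>A. if A = {} then 1 else 0)"

definition gwordprod :: "(gvar \<Rightarrow> 'a::comm_ring_1 grass) \<Rightarrow> gvar list \<Rightarrow> 'a grass" where
  "gwordprod \<phi> w = foldr (\<lambda>x acc. gmult (\<phi> x) acc) w gone"

definition geval :: "(gvar \<Rightarrow> 'a::comm_ring_1 grass) \<Rightarrow> 'a fpoly \<Rightarrow> 'a grass" where
  "geval \<phi> f = (\<lambda>C. \<Sum>w\<in>fsupp f. f w * gwordprod \<phi> w C)"

definition ghomog :: "(nat \<Rightarrow> int) \<Rightarrow> int \<Rightarrow> 'a::zero grass \<Rightarrow> bool" where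
  "ghomog deg g x \<longleftrightarrow> (\<forall>A. x A \<noteq> 0 \<longrightarrow> (\<Sum>i\<in>A. deg i) = g)"

definition TZ_E :: "(nat \<Rightarrow> int) \<Rightarrow> 'a::comm_ring_1 fpoly set" where
  "TZ_E deg = {f. ffin f \<and> (\<forall>\<phi>. (\<forall>x. grass_elem (\<phi> x) \<and> ghomog deg (snd x) (\<phi> x))
                                 \<longrightarrow> geval \<phi> f = (\<lambda>_. 0))}"

definition ecard :: "'b set \<Rightarrow> enat" where
  "ecard A = (if finite A then enat (card A) else \<infinity>)"

text \<open>deg is a grading E^{(v_1,...,v_n)}_{(r_1,...,r_n)}: the generators are split into the
  disjoint sets {i. deg i = r_j} of cardinality v_j covering all generators.\<close>
definition is_split_grading :: "(nat \<Rightarrow> int) \<Rightarrow> int list \<Rightarrow> enat list \<Rightarrow> bool" where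
  "is_split_grading deg rs vs \<longleftrightarrow> length rs = length vs \<and> distinct rs
     \<and> (\<forall>i. deg i \<in> set rs)
     \<and> (\<forall>j<length rs. ecard {i. deg i = rs ! j} = vs ! j)"

text \<open>F<X|dZ> is encoded in the same type as F<X|Z>, as polynomials in the variables
  (i, dn). Phi_d : x_i^n \<mapsto> x_i^{dn} (renaming of variables, extended to words), and
  Psi_d : x_i^{dn} \<mapsto> x_i^{dn} is then the identity on this encoding.\<close>
definition Phi :: "int \<Rightarrow> 'a::zero fpoly \<Rightarrow> 'a fpoly" where
  "Phi d f = (\<lambda>w. if (\<forall>x\<in>set w. d dvd snd x) then f (map (\<lambda>(i, n). (i, n div d)) w) else 0)"

definition Psi :: "int \<Rightarrow> 'a::zero fpoly \<Rightarrow> 'a fpoly" where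
  "Psi d f = f"

end

theory Submission
  imports Defs "HOL-Library.Countable_Set"
begin

text \<open>Let \<open>d = gcd a b c\<close>. Every generator of \<open>E\<close> has degree in \<open>d\<int>\<close>, so a graded
  substitution into \<open>E\<close> kills every variable of degree outside \<open>d\<int>\<close>, and relabelling the
  generators by a bijection turns the grading into \<open>d\<close> times the reduced one. Hence \<open>f\<close> is a
  graded identity for \<open>(-b, c, a)\<close> iff its restriction to the variables \<open>x\<^sub>i\<^sup>d\<^sup>n\<close>, renamed
  to \<open>x\<^sub>i\<^sup>n\<close>, is one for \<open>(-b', c', a')\<close>.

  The preimages of a \<open>T\<^sub>\<int>\<close>-ideal under this restriction-and-renaming and under \<open>\<Phi>\<^sub>d\<close> are
  again \<open>T\<^sub>\<int>\<close>-ideals, and \<open>f\<close> differs from \<open>\<Phi>\<^sub>d\<close> of its restriction by monomials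
  containing a variable of degree outside \<open>d\<int>\<close>. So the \<open>T\<^sub>\<int>\<close>-ideal generated by \<open>\<Phi>\<^sub>d(S)\<close>
  and those variables consists of exactly the \<open>f\<close> whose restriction lies in the \<open>T\<^sub>\<int>\<close>-ideal
  generated by \<open>S\<close>.\<close>

section \<open>Noncommutative polynomials and \<open>T\<^sub>\<int>\<close>-ideals\<close>

lemma fmult_fmono: "fmult (fmono u) (fmono v) = (fmono (u @ v) :: 'a::comm_semiring_1 fpoly)"
proof
  fix w :: "gvar list"
  have split: "take i w = u \<and> drop i w = v \<longleftrightarrow> i = length u \<and> w = u @ v" if "i \<le> length w" for i
    using that by (metis append_eq_conv_conj append_take_drop_id length_take min.absorb2)
  have "fmult (fmono u) (fmono v) w = (\<Sum>i\<le>length w. if i = length u \<and> w = u @ v then 1 else 0 :: 'a)"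
    unfolding fmult_def by (intro sum.cong refl) (auto simp: fmono_def split)
  also have "\<dots> = fmono (u @ v) w"
    by (cases "w = u @ v") (simp_all add: fmono_def)
  finally show "fmult (fmono u) (fmono v) w = (fmono (u @ v) w :: 'a)" .
qed

lemma ffin_fmono: "ffin (fmono w :: 'a::{zero,one} fpoly)"
proof -
  have "fsupp (fmono w :: 'a fpoly) \<subseteq> {w}" by (auto simp: fsupp_def fmono_def)
  then show ?thesis unfolding ffin_def by (rule finite_subset) simp
qed

lemma ffin_fvar: "ffin (fvar x :: 'a::{zero,one} fpoly)"
  by (simp add: fvar_def ffin_fmono)

lemma ffin_zero: "ffin (\<lambda>_. 0::'a::zero)"
  by (simp add: ffin_def fsupp_def)

lemma ffin_fadd: "ffin p \<Longrightarrow> ffin q \<Longrightarrow> ffin (fadd p (q::'a::monoid_add fpoly))"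
  unfolding ffin_def by (rule finite_subset[of _ "fsupp p \<union> fsupp q"]) (auto simp: fsupp_def fadd_def)

lemma ffin_fsmult: "ffin p \<Longrightarrow> ffin (fsmult c (p::'a::mult_zero fpoly))"
  unfolding ffin_def by (rule finite_subset[of _ "fsupp p"]) (auto simp: fsupp_def fsmult_def)

lemma fsupp_fmult: "fsupp (fmult p q) \<subseteq> (\<lambda>(u, v). u @ v) ` (fsupp p \<times> fsupp (q::'a::comm_semiring_1 fpoly))"
proof
  fix w assume "w \<in> fsupp (fmult p q)"
  then obtain i where "p (take i w) * q (drop i w) \<noteq> 0"
    unfolding fsupp_def fmult_def by (meson mem_Collect_eq sum.neutral)
  then have "(take i w, drop i w) \<in> fsupp p \<times> fsupp q" by (auto simp: fsupp_def)
  then show "w \<in> (\<lambda>(u, v). u @ v) ` (fsupp p \<times> fsupp q)"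
    by (metis (no_types, lifting) append_take_drop_id case_prod_conv image_eqI)
qed

lemma ffin_fmult: "ffin p \<Longrightarrow> ffin q \<Longrightarrow> ffin (fmult p (q::'a::comm_semiring_1 fpoly))"
  unfolding ffin_def using fsupp_fmult by (metis finite_SigmaI finite_imageI finite_subset)

lemma ffin_fwordprod: "(\<And>x. ffin (s x)) \<Longrightarrow> ffin (fwordprod s w :: 'a::comm_semiring_1 fpoly)"
  by (induction w) (simp_all add: fwordprod_def ffin_fmono ffin_fmult)

lemma ffin_fsubst:
  assumes "\<And>x. ffin (s x)" and "ffin f"
  shows "ffin (fsubst s (f::'a::comm_semiring_1 fpoly))"
proof -
  have "fsupp (fsubst s f) \<subseteq> (\<Union>w\<in>fsupp f. fsupp (fwordprod s w))"
  proof
    fix u assume "u \<in> fsupp (fsubst s f)"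
    then have "(\<Sum>w\<in>fsupp f. f w * fwordprod s w u) \<noteq> 0" by (simp add: fsupp_def fsubst_def)
    then obtain w where "w \<in> fsupp f" "f w * fwordprod s w u \<noteq> 0" by (meson sum.neutral)
    then show "u \<in> (\<Union>w\<in>fsupp f. fsupp (fwordprod s w))" by (auto simp: fsupp_def)
  qed
  moreover have "finite (\<Union>w\<in>fsupp f. fsupp (fwordprod s w))"
    using assms ffin_fwordprod unfolding ffin_def by blast
  ultimately show ?thesis unfolding ffin_def by (rule finite_subset)
qed

lemma fmult_zero_left [simp]: "fmult (\<lambda>_. 0) q = (\<lambda>_. (0::'a::comm_semiring_1))"
  by (simp add: fmult_def)

lemma fmult_zero_right [simp]: "fmult p (\<lambda>_. 0) = (\<lambda>_. (0::'a::comm_semiring_1))"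
  by (simp add: fmult_def)

lemma fwordprod_zero:
  assumes "x \<in> set w" and "s x = (\<lambda>_. 0)"
  shows "fwordprod s w = (\<lambda>_. (0::'a::comm_semiring_1))"
  using assms by (induction w) (auto simp: fwordprod_def)

lemma fwordprod_map: "fwordprod s (map g w) = fwordprod (s \<circ> g) w"
  by (simp add: fwordprod_def foldr_map comp_def)

lemma fhomog_fvar: "fhomog (snd x) (fvar x :: 'a::{zero,one} fpoly)"
  by (auto simp: fhomog_def fvar_def fmono_def)

lemma is_idealD:
  assumes "is_ideal I"
  shows "I \<subseteq> {f. ffin f}" and "(\<lambda>_. 0) \<in> I"
    and "p \<in> I \<Longrightarrow> q \<in> I \<Longrightarrow> fadd p q \<in> I"
    and "p \<in> I \<Longrightarrow> fsmult c p \<in> I"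
    and "p \<in> I \<Longrightarrow> ffin q \<Longrightarrow> fmult q p \<in> I"
    and "p \<in> I \<Longrightarrow> ffin q \<Longrightarrow> fmult p q \<in> I"
  using assms unfolding is_ideal_def by blast+

lemma is_TZ_ideal_is_ideal: "is_TZ_ideal I \<Longrightarrow> is_ideal I"
  by (simp add: is_TZ_ideal_def)

lemma graded_endo_substD:
  assumes "graded_endo_subst s"
  shows "ffin (s x)" and "fhomog (snd x) (s x)"
  using assms unfolding graded_endo_subst_def by blast+

lemma is_TZ_ideal_ffin: "is_TZ_ideal {f :: 'a::comm_semiring_1 fpoly. ffin f}"
  unfolding is_TZ_ideal_def is_ideal_def
  by (auto simp: ffin_zero ffin_fadd ffin_fsmult ffin_fmult graded_endo_substD intro!: ffin_fsubst)

lemma TZ_gen_least: "is_TZ_ideal I \<Longrightarrow> S \<subseteq> I \<Longrightarrow> TZ_gen S \<subseteq> I"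
  unfolding TZ_gen_def by blast

lemma TZ_gen_superset: "S \<subseteq> TZ_gen S"
  unfolding TZ_gen_def by blast

lemma is_TZ_ideal_Inter:
  assumes "\<And>I. I \<in> \<I> \<Longrightarrow> is_TZ_ideal I" and "\<I> \<noteq> {}"
  shows "is_TZ_ideal (\<Inter>\<I>)"
proof -
  have "\<Inter>\<I> \<subseteq> {f. ffin f}" using assms unfolding is_TZ_ideal_def is_ideal_def by blast
  with assms show ?thesis by (simp add: is_TZ_ideal_def is_ideal_def)
qed

lemma is_TZ_ideal_TZ_gen:
  assumes "S \<subseteq> {f :: 'a::comm_semiring_1 fpoly. ffin f}"
  shows "is_TZ_ideal (TZ_gen S)"
  unfolding TZ_gen_def using assms is_TZ_ideal_ffin by (intro is_TZ_ideal_Inter) auto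

lemma is_TZ_ideal_preimage:
  fixes h :: "'a::comm_semiring_1 fpoly \<Rightarrow> 'a fpoly"
  assumes I: "is_TZ_ideal I"
    and zero: "h (\<lambda>_. 0) = (\<lambda>_. 0)"
    and add: "\<And>p q. h (fadd p q) = fadd (h p) (h q)"
    and smult: "\<And>c p. h (fsmult c p) = fsmult c (h p)"
    and mult: "\<And>p q. h (fmult p q) = fmult (h p) (h q)"
    and fin: "\<And>p. ffin p \<Longrightarrow> ffin (h p)"
    and subst: "\<And>s f. graded_endo_subst s \<Longrightarrow> ffin f \<Longrightarrow>
                  \<exists>s'. graded_endo_subst s' \<and> h (fsubst s f) = fsubst s' (h f)"
  shows "is_TZ_ideal {f. ffin f \<and> h f \<in> I}"
proof -
  have ideal: "is_ideal I" using I by (rule is_TZ_ideal_is_ideal)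
  have "is_ideal {f. ffin f \<and> h f \<in> I}"
    unfolding is_ideal_def
  proof (intro conjI ballI allI impI)
    show "(\<lambda>_. 0) \<in> {f. ffin f \<and> h f \<in> I}"
      using is_idealD(2)[OF ideal] by (simp add: zero ffin_zero)
    fix p assume p: "p \<in> {f. ffin f \<and> h f \<in> I}"
    show "fadd p q \<in> {f. ffin f \<and> h f \<in> I}" if "q \<in> {f. ffin f \<and> h f \<in> I}" for q
      using p that is_idealD(3)[OF ideal] by (simp add: add ffin_fadd)
    show "fsmult c p \<in> {f. ffin f \<and> h f \<in> I}" for c
      using p is_idealD(4)[OF ideal] by (simp add: smult ffin_fsmult)
    fix q :: "'a fpoly" assume q: "ffin q"
    show "fmult q p \<in> {f. ffin f \<and> h f \<in> I}" "fmult p q \<in> {f. ffin f \<and> h f \<in> I}"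
      using p q fin[OF q] is_idealD(5,6)[OF ideal] by (simp_all add: mult ffin_fmult)
  qed auto
  moreover have "fsubst s f \<in> {f. ffin f \<and> h f \<in> I}"
    if s: "graded_endo_subst s" and f: "ffin f" "h f \<in> I" for s f
  proof -
    obtain s' where "graded_endo_subst s'" "h (fsubst s f) = fsubst s' (h f)"
      using subst[OF s f(1)] by blast
    then have "h (fsubst s f) \<in> I" using I f(2) by (simp add: is_TZ_ideal_def)
    moreover have "ffin (fsubst s f)"
      using s f(1) by (simp add: ffin_fsubst graded_endo_substD)
    ultimately show ?thesis by simp
  qed
  ultimately show ?thesis by (auto simp: is_TZ_ideal_def)
qed

lemma fmono_in_ideal:
  assumes "is_ideal I" and "x \<in> set w" and "fvar x \<in> I"
  shows "fmono w \<in> I"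
proof -
  obtain u v where w: "w = u @ x # v" using assms(2) by (meson split_list)
  have "fmult (fmult (fmono u) (fvar x)) (fmono v) \<in> I"
    using is_idealD(5,6)[OF assms(1)] assms(3) ffin_fmono by blast
  then show ?thesis by (simp add: w fvar_def fmult_fmono)
qed

lemma monomial_sum_in_ideal:
  fixes I :: "'a::comm_semiring_1 fpoly set"
  assumes "is_ideal I" and "finite W" and "\<And>w. w \<in> W \<Longrightarrow> fmono w \<in> I"
  shows "(\<lambda>u. \<Sum>w\<in>W. c w * fmono w u) \<in> I"
  using assms(2,3)
proof (induction W rule: finite_induct)
  case empty
  then show ?case using is_idealD(2)[OF assms(1)] by simp
next
  case (insert w W)
  then have "fadd (fsmult (c w) (fmono w)) (\<lambda>u. \<Sum>w\<in>W. c w * fmono w u) \<in> I"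
    using is_idealD(3,4)[OF assms(1)] by simp
  then show ?case using insert(1,2) by (simp add: fadd_def fsmult_def)
qed

section \<open>Rescaling the degrees of the variables\<close>

definition scale_gvar :: "int \<Rightarrow> gvar \<Rightarrow> gvar" where
  "scale_gvar d = (\<lambda>(i, n). (i, d * n))"

definition unscale_gvar :: "int \<Rightarrow> gvar \<Rightarrow> gvar" where
  "unscale_gvar d = (\<lambda>(i, n). (i, n div d))"

definition dvd_word :: "int \<Rightarrow> gvar list \<Rightarrow> bool" where
  "dvd_word d w \<longleftrightarrow> (\<forall>x\<in>set w. d dvd snd x)"

text \<open>A left inverse of \<open>Phi d\<close>: it keeps only the words in the variables \<open>x\<^sub>i\<^sup>d\<^sup>n\<close>
  and renames them back to \<open>x\<^sub>i\<^sup>n\<close>.\<close>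
definition descale :: "int \<Rightarrow> 'a fpoly \<Rightarrow> 'a fpoly" where
  "descale d f = (\<lambda>w. f (map (scale_gvar d) w))"

lemma snd_scale_gvar [simp]: "snd (scale_gvar d x) = d * snd x"
  by (cases x) (simp add: scale_gvar_def)

lemma unscale_scale_gvar [simp]: "d \<noteq> 0 \<Longrightarrow> unscale_gvar d (scale_gvar d x) = x"
  by (cases x) (simp add: unscale_gvar_def scale_gvar_def)

lemma scale_unscale_gvar: "d dvd snd x \<Longrightarrow> scale_gvar d (unscale_gvar d x) = x"
  by (cases x) (auto simp: unscale_gvar_def scale_gvar_def)

lemma inj_scale_gvar: "d \<noteq> 0 \<Longrightarrow> inj (scale_gvar d)"
  by (metis injI unscale_scale_gvar)

lemma map_unscale_scale_gvar [simp]: "d \<noteq> 0 \<Longrightarrow> map (unscale_gvar d \<circ> scale_gvar d) w = w"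
  by (induction w) simp_all

lemma map_scale_unscale_gvar: "dvd_word d w \<Longrightarrow> map (scale_gvar d \<circ> unscale_gvar d) w = w"
  by (induction w) (auto simp: dvd_word_def scale_unscale_gvar)

lemma dvd_word_map_scale_gvar [simp]: "dvd_word d (map (scale_gvar d) w)"
  by (auto simp: dvd_word_def)

lemma dvd_word_append [simp]: "dvd_word d (u @ v) \<longleftrightarrow> dvd_word d u \<and> dvd_word d v"
  by (auto simp: dvd_word_def)

lemma snd_unscale_gvar [simp]: "snd (unscale_gvar d x) = snd x div d"
  by (cases x) (simp add: unscale_gvar_def)

lemma degree_map_scale_gvar [simp]: "sum_list (map (snd \<circ> scale_gvar d) w) = d * sum_list (map snd w)"
  by (induction w) (auto simp: algebra_simps)

lemma degree_dvd_word:
  "dvd_word d w \<Longrightarrow> sum_list (map snd w) = d * sum_list (map snd (map (unscale_gvar d) w))"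
  by (induction w) (auto simp: dvd_word_def algebra_simps)

lemma Phi_eq: "Phi d f w = (if dvd_word d w then f (map (unscale_gvar d) w) else 0)"
  by (simp add: Phi_def dvd_word_def unscale_gvar_def)

lemma descale_Phi: "d \<noteq> 0 \<Longrightarrow> descale d (Phi d g) = g"
  by (simp add: descale_def Phi_eq)

lemma Phi_descale: "Phi d (descale d f) w = (if dvd_word d w then f w else 0)"
  by (simp add: Phi_eq descale_def map_scale_unscale_gvar)

lemma fsupp_descale: "fsupp (descale d f) = map (scale_gvar d) -` fsupp f"
  by (auto simp: fsupp_def descale_def)

lemma ffin_descale: "d \<noteq> 0 \<Longrightarrow> ffin f \<Longrightarrow> ffin (descale d f)"
  unfolding ffin_def fsupp_descale by (rule finite_vimageI) (simp_all add: inj_scale_gvar)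

lemma descale_zero: "descale d (\<lambda>_. 0) = (\<lambda>_. 0)"
  by (simp add: descale_def)

lemma descale_fadd: "descale d (fadd p q) = fadd (descale d p) (descale d q)"
  by (simp add: descale_def fadd_def)

lemma descale_fsmult: "descale d (fsmult c p) = fsmult c (descale d p)"
  by (simp add: descale_def fsmult_def)

lemma descale_fmult: "descale d (fmult p q) = fmult (descale d p) (descale d (q::'a::comm_semiring_1 fpoly))"
  by (simp add: descale_def fmult_def take_map drop_map)

lemma descale_fwordprod:
  "descale d (fwordprod s w) = fwordprod (\<lambda>x. descale d (s x)) (w::gvar list)"
  by (induction w) (simp_all add: fwordprod_def descale_fmult, simp add: descale_def fmono_def)

lemma descale_fhomog_not_dvd:
  assumes "fhomog m p" and "\<not> d dvd m"
  shows "descale d p = (\<lambda>_. 0)"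
proof
  fix w
  have "d dvd sum_list (map snd (map (scale_gvar d) w))" by simp
  with assms show "descale d p w = 0" by (auto simp: descale_def fhomog_def)
qed

lemma fhomog_descale:
  assumes "fhomog (d * n) p" and "d \<noteq> 0"
  shows "fhomog n (descale d p)"
  unfolding fhomog_def
proof (intro allI impI)
  fix w assume "descale d p w \<noteq> 0"
  moreover have "p (map (scale_gvar d) w) \<noteq> 0 \<longrightarrow> sum_list (map snd (map (scale_gvar d) w)) = d * n"
    using assms(1) unfolding fhomog_def by blast
  ultimately show "sum_list (map snd w) = n" using assms(2) by (simp add: descale_def)
qed

lemma graded_endo_subst_descale:
  assumes "graded_endo_subst s" and "d \<noteq> 0"
  shows "graded_endo_subst (\<lambda>y. descale d (s (scale_gvar d y)))"
proof -
  have "ffin (descale d (s (scale_gvar d y)))" for y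
    using assms by (simp add: ffin_descale graded_endo_substD(1))
  moreover have "fhomog (snd y) (descale d (s (scale_gvar d y)))" for y
    using graded_endo_substD(2)[OF assms(1), of "scale_gvar d y"] assms(2)
    by (simp add: fhomog_descale)
  ultimately show ?thesis by (simp add: graded_endo_subst_def)
qed

lemma fsupp_Int_dvd_word:
  assumes "d \<noteq> 0"
  shows "fsupp f \<inter> {w. dvd_word d w} = map (scale_gvar d) ` fsupp (descale d f)"
proof
  show "fsupp f \<inter> {w. dvd_word d w} \<subseteq> map (scale_gvar d) ` fsupp (descale d f)"
  proof
    fix w assume w: "w \<in> fsupp f \<inter> {w. dvd_word d w}"
    then have "w = map (scale_gvar d) (map (unscale_gvar d) w)"
      by (simp add: map_scale_unscale_gvar)
    moreover have "map (unscale_gvar d) w \<in> fsupp (descale d f)"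
      using w by (simp add: fsupp_descale map_scale_unscale_gvar)
    ultimately show "w \<in> map (scale_gvar d) ` fsupp (descale d f)" by blast
  qed
qed (auto simp: fsupp_descale)

lemma sum_fsupp_descale:
  fixes f :: "'a::comm_semiring_1 fpoly"
  assumes "d \<noteq> 0" and "ffin f" and "\<And>w. w \<in> fsupp f \<Longrightarrow> \<not> dvd_word d w \<Longrightarrow> F w = 0"
  shows "(\<Sum>w\<in>fsupp f. f w * F w)
       = (\<Sum>w\<in>fsupp (descale d f). descale d f w * F (map (scale_gvar d) w))"
proof -
  have "(\<Sum>w\<in>fsupp f. f w * F w) = (\<Sum>w\<in>fsupp f \<inter> {w. dvd_word d w}. f w * F w)"
    using assms(2,3) by (intro sum.mono_neutral_right) (auto simp: ffin_def)
  also have "\<dots> = (\<Sum>w\<in>map (scale_gvar d) ` fsupp (descale d f). f w * F w)"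
    by (simp only: fsupp_Int_dvd_word[OF assms(1)])
  also have "\<dots> = (\<Sum>w\<in>fsupp (descale d f). descale d f w * F (map (scale_gvar d) w))"
    using inj_scale_gvar[OF assms(1)]
    by (subst sum.reindex) (auto simp: descale_def inj_on_def inj_map_eq_map)
  finally show ?thesis .
qed

lemma descale_fsubst:
  fixes f :: "'a::comm_semiring_1 fpoly"
  assumes "d \<noteq> 0" and "graded_endo_subst s" and "ffin f"
  shows "descale d (fsubst s f) = fsubst (\<lambda>y. descale d (s (scale_gvar d y))) (descale d f)"
proof
  fix u
  have vanish: "fwordprod (\<lambda>x. descale d (s x)) w = (\<lambda>_. 0)" if "\<not> dvd_word d w" for w
  proof -
    from that obtain x where x: "x \<in> set w" "\<not> d dvd snd x" unfolding dvd_word_def by blast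
    have "descale d (s x) = (\<lambda>_. 0)"
      using descale_fhomog_not_dvd[OF graded_endo_substD(2)[OF assms(2)] x(2)] .
    with x(1) show ?thesis by (rule fwordprod_zero)
  qed
  have "descale d (fsubst s f) u = (\<Sum>w\<in>fsupp f. f w * fwordprod (\<lambda>x. descale d (s x)) w u)"
    by (simp add: fsubst_def descale_fwordprod[symmetric]) (simp add: descale_def)
  also have "\<dots> = fsubst (\<lambda>y. descale d (s (scale_gvar d y))) (descale d f) u"
    using vanish by (simp add: sum_fsupp_descale[OF assms(1,3)] fsubst_def fwordprod_map comp_def)
  finally show "descale d (fsubst s f) u = fsubst (\<lambda>y. descale d (s (scale_gvar d y))) (descale d f) u" .
qed

lemma is_TZ_ideal_descale_preimage:
  fixes J :: "'a::comm_semiring_1 fpoly set"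
  assumes "is_TZ_ideal J" and "d \<noteq> 0"
  shows "is_TZ_ideal {f. ffin f \<and> descale d f \<in> J}"
proof (rule is_TZ_ideal_preimage[OF assms(1)])
  show "\<exists>s'. graded_endo_subst s' \<and> descale d (fsubst s f) = fsubst s' (descale d f)"
    if "graded_endo_subst s" and "ffin f" for s f
    using graded_endo_subst_descale[OF that(1) assms(2)] descale_fsubst[OF assms(2) that] by blast
qed (simp_all add: assms(2) descale_zero descale_fadd descale_fsmult descale_fmult ffin_descale)

lemma Phi_zero: "Phi d (\<lambda>_. 0) = (\<lambda>_. 0)"
  by (simp add: Phi_def)

lemma Phi_fadd: "Phi d (fadd p q) = fadd (Phi d p) (Phi d (q::'a::comm_monoid_add fpoly))"
  by (auto simp: Phi_def fadd_def)

lemma Phi_fsmult: "Phi d (fsmult c p) = fsmult c (Phi d (p::'a::mult_zero fpoly))"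
  by (auto simp: Phi_def fsmult_def)

lemma Phi_fmult: "Phi d (fmult p q) = fmult (Phi d p) (Phi d (q::'a::comm_semiring_1 fpoly))"
proof
  fix w
  have split: "dvd_word d w \<longleftrightarrow> dvd_word d (take i w) \<and> dvd_word d (drop i w)" for i
    by (metis append_take_drop_id dvd_word_append)
  show "Phi d (fmult p q) w = fmult (Phi d p) (Phi d q) w"
  proof (cases "dvd_word d w")
    case True
    then show ?thesis using split by (simp add: Phi_eq fmult_def take_map drop_map)
  next
    case False
    then have "Phi d p (take i w) * Phi d q (drop i w) = 0" for i
      using split by (simp add: Phi_eq)
    then have "fmult (Phi d p) (Phi d q) w = 0" by (simp add: fmult_def)
    then show ?thesis using False by (simp add: Phi_eq)
  qed
qed

lemma Phi_fwordprod: "Phi d (fwordprod s w) = fwordprod (\<lambda>x. Phi d (s x)) (w::gvar list)"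
  by (induction w) (simp_all add: fwordprod_def Phi_fmult, auto simp: Phi_eq fmono_def dvd_word_def)

lemma fsupp_Phi:
  assumes "d \<noteq> 0"
  shows "fsupp (Phi d g) = map (scale_gvar d) ` fsupp g"
proof -
  have "fsupp (Phi d g) \<subseteq> {w. dvd_word d w}" by (auto simp: fsupp_def Phi_eq)
  then have "fsupp (Phi d g) = fsupp (Phi d g) \<inter> {w. dvd_word d w}" by blast
  then show ?thesis by (simp add: fsupp_Int_dvd_word assms descale_Phi)
qed

lemma ffin_Phi: "d \<noteq> 0 \<Longrightarrow> ffin g \<Longrightarrow> ffin (Phi d g)"
  by (simp add: ffin_def fsupp_Phi)

lemma fhomog_Phi:
  assumes "fhomog n p"
  shows "fhomog (d * n) (Phi d p)"
  unfolding fhomog_def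
proof (intro allI impI)
  fix w assume "Phi d p w \<noteq> 0"
  then have w: "dvd_word d w" and "p (map (unscale_gvar d) w) \<noteq> 0"
    by (auto simp: Phi_eq split: if_splits)
  then have "sum_list (map snd (map (unscale_gvar d) w)) = n"
    using assms unfolding fhomog_def by blast
  then show "sum_list (map snd w) = d * n"
    unfolding degree_dvd_word[OF w] by simp
qed

definition Phi_subst :: "int \<Rightarrow> (gvar \<Rightarrow> 'a::comm_semiring_1 fpoly) \<Rightarrow> gvar \<Rightarrow> 'a fpoly" where
  "Phi_subst d s x = (if d dvd snd x then Phi d (s (unscale_gvar d x)) else fvar x)"

lemma graded_endo_subst_Phi_subst:
  assumes "graded_endo_subst s" and "d \<noteq> 0"
  shows "graded_endo_subst (Phi_subst d s)"
proof -
  have "fhomog (snd x) (Phi d (s (unscale_gvar d x)))" if "d dvd snd x" for x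
    using fhomog_Phi[OF graded_endo_substD(2)[OF assms(1)], of d "unscale_gvar d x"] that by simp
  then have "ffin (Phi_subst d s x) \<and> fhomog (snd x) (Phi_subst d s x)" for x
    by (simp add: Phi_subst_def ffin_Phi ffin_fvar fhomog_fvar graded_endo_substD(1)[OF assms(1)] assms(2))
  then show ?thesis by (simp add: graded_endo_subst_def)
qed

lemma Phi_fsubst:
  fixes g :: "'a::comm_semiring_1 fpoly"
  assumes "d \<noteq> 0" and "ffin g"
  shows "Phi d (fsubst s g) = fsubst (Phi_subst d s) (Phi d g)"
proof
  fix u
  have "Phi d (fsubst s g) u = (\<Sum>w\<in>fsupp g. g w * fwordprod (\<lambda>x. Phi d (s x)) w u)"
    by (simp add: Phi_eq fsubst_def Phi_fwordprod[symmetric])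
  also have "\<dots> = (\<Sum>w\<in>fsupp g. g w * fwordprod (Phi_subst d s) (map (scale_gvar d) w) u)"
    using assms(1) by (simp add: fwordprod_map comp_def Phi_subst_def)
  also have "\<dots> = fsubst (Phi_subst d s) (Phi d g) u"
    unfolding fsubst_def
    by (subst sum_fsupp_descale[OF assms(1) ffin_Phi[OF assms]])
       (auto simp: descale_Phi assms(1) fsupp_def Phi_eq)
  finally show "Phi d (fsubst s g) u = fsubst (Phi_subst d s) (Phi d g) u" .
qed

lemma is_TZ_ideal_Phi_preimage:
  fixes I :: "'a::comm_semiring_1 fpoly set"
  assumes "is_TZ_ideal I" and "d \<noteq> 0"
  shows "is_TZ_ideal {g. ffin g \<and> Phi d g \<in> I}"
proof (rule is_TZ_ideal_preimage[OF assms(1)])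
  show "\<exists>s'. graded_endo_subst s' \<and> Phi d (fsubst s g) = fsubst s' (Phi d g)"
    if "graded_endo_subst s" and "ffin g" for s g
    using graded_endo_subst_Phi_subst[OF that(1) assms(2)] Phi_fsubst[OF assms(2) that(2)] by blast
qed (simp_all add: assms(2) Phi_zero Phi_fadd Phi_fsmult Phi_fmult ffin_Phi)

lemma mem_ideal_if_Phi_descale_mem:
  fixes I :: "'a::comm_semiring_1 fpoly set"
  assumes I: "is_ideal I" and Phi_mem: "Phi d (descale d f) \<in> I"
    and N: "\<And>i m. \<not> d dvd m \<Longrightarrow> fvar (i, m) \<in> I" and "ffin f"
  shows "f \<in> I"
proof -
  define W where "W = {w \<in> fsupp f. \<not> dvd_word d w}"
  have "finite W" using \<open>ffin f\<close> by (simp add: W_def ffin_def)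
  moreover have "fmono w \<in> I" if "w \<in> W" for w
  proof -
    from that obtain x where "x \<in> set w" "\<not> d dvd snd x" unfolding W_def dvd_word_def by blast
    then show ?thesis using fmono_in_ideal[OF I] N[of "snd x" "fst x"] by simp
  qed
  ultimately have rest: "(\<lambda>u. \<Sum>w\<in>W. f w * fmono w u) \<in> I"
    by (rule monomial_sum_in_ideal[OF I])
  have "(\<Sum>w\<in>W. f w * fmono w u) = (if u \<in> W then f u else 0)" for u
    using \<open>finite W\<close> by (simp add: fmono_def sum.delta' if_distrib[of "(*) _"] cong: if_cong)
  then have "f = fadd (Phi d (descale d f)) (\<lambda>u. \<Sum>w\<in>W. f w * fmono w u)"
    by (auto simp: fadd_def Phi_descale W_def fsupp_def)
  then show ?thesis using is_idealD(3)[OF I Phi_mem rest] by simp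
qed

theorem TZ_gen_Phi_image:
  fixes S :: "'a::comm_semiring_1 fpoly set"
  assumes "d \<noteq> 0" and "S \<subseteq> {f. ffin f}"
  shows "TZ_gen (Phi d ` S \<union> {fvar (i, m) | i m. \<not> d dvd m}) = {f. ffin f \<and> descale d f \<in> TZ_gen S}"
    (is "TZ_gen ?G = ?K")
proof
  have S_ideal: "is_TZ_ideal (TZ_gen S)" using assms(2) by (rule is_TZ_ideal_TZ_gen)
  show "TZ_gen ?G \<subseteq> ?K"
  proof (rule TZ_gen_least)
    show "is_TZ_ideal ?K" using S_ideal assms(1) by (rule is_TZ_ideal_descale_preimage)
    have "Phi d g \<in> ?K" if "g \<in> S" for g
      using that assms TZ_gen_superset by (auto simp: ffin_Phi descale_Phi)
    moreover have "fvar (i, m) \<in> ?K" if "\<not> d dvd m" for i m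
    proof -
      have "descale d (fvar (i, m)) = (\<lambda>_. 0 :: 'a)"
        using descale_fhomog_not_dvd[of m "fvar (i, m)" d] fhomog_fvar[of "(i, m)"] that by simp
      moreover have "(\<lambda>_. 0) \<in> TZ_gen S"
        using is_idealD(2)[OF is_TZ_ideal_is_ideal[OF S_ideal]] .
      ultimately show ?thesis by (simp add: ffin_fvar)
    qed
    ultimately show "?G \<subseteq> ?K" by blast
  qed
  show "?K \<subseteq> TZ_gen ?G"
  proof
    fix f assume f: "f \<in> ?K"
    have "?G \<subseteq> {f. ffin f}" using assms by (auto simp: ffin_Phi ffin_fvar)
    then have G_ideal: "is_TZ_ideal (TZ_gen ?G)" by (rule is_TZ_ideal_TZ_gen)
    have "S \<subseteq> {g. ffin g \<and> Phi d g \<in> TZ_gen ?G}"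
      using assms(2) TZ_gen_superset[of ?G] by blast
    then have "TZ_gen S \<subseteq> {g. ffin g \<and> Phi d g \<in> TZ_gen ?G}"
      by (rule TZ_gen_least[OF is_TZ_ideal_Phi_preimage[OF G_ideal assms(1)]])
    then have "Phi d (descale d f) \<in> TZ_gen ?G" using f by blast
    moreover have "fvar (i, m) \<in> TZ_gen ?G" if "\<not> d dvd m" for i m
      using that TZ_gen_superset[of ?G] by blast
    moreover have "ffin f" using f by blast
    ultimately show "f \<in> TZ_gen ?G"
      by (rule mem_ideal_if_Phi_descale_mem[OF is_TZ_ideal_is_ideal[OF G_ideal]])
  qed
qed

section \<open>Graded identities of the Grassmann algebra\<close>

definition graded_assignment :: "(nat \<Rightarrow> int) \<Rightarrow> (gvar \<Rightarrow> 'a::zero grass) \<Rightarrow> bool" where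
  "graded_assignment deg \<phi> \<longleftrightarrow> (\<forall>x. grass_elem (\<phi> x) \<and> ghomog deg (snd x) (\<phi> x))"

lemma TZ_E_iff:
  "f \<in> TZ_E deg \<longleftrightarrow> ffin f \<and> (\<forall>\<phi>. graded_assignment deg \<phi> \<longrightarrow> geval \<phi> f = (\<lambda>_. 0))"
  by (simp add: TZ_E_def graded_assignment_def)

lemma gmult_zero_left [simp]: "gmult (\<lambda>_. 0) y = (\<lambda>_. (0::'a::comm_ring_1))"
  unfolding gmult_def by (rule ext) simp

lemma gmult_zero_right [simp]: "gmult x (\<lambda>_. 0) = (\<lambda>_. (0::'a::comm_ring_1))"
  unfolding gmult_def by (rule ext) simp

lemma gwordprod_zero:
  assumes "x \<in> set w" and "\<phi> x = (\<lambda>_. 0)"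
  shows "gwordprod \<phi> w = (\<lambda>_. (0::'a::comm_ring_1))"
  using assms by (induction w) (auto simp: gwordprod_def)

lemma gwordprod_map: "gwordprod \<phi> (map g w) = gwordprod (\<phi> \<circ> g) w"
  by (simp add: gwordprod_def foldr_map comp_def)

lemma geval_descale:
  fixes f :: "'a::comm_ring_1 fpoly"
  assumes "d \<noteq> 0" and "ffin f" and "\<And>x. \<not> d dvd snd x \<Longrightarrow> \<phi> x = (\<lambda>_. 0)"
  shows "geval \<phi> f = geval (\<phi> \<circ> scale_gvar d) (descale d f)"
proof
  fix C
  have "gwordprod \<phi> w C = 0" if "\<not> dvd_word d w" for w
  proof -
    from that obtain x where "x \<in> set w" "\<not> d dvd snd x" unfolding dvd_word_def by blast
    then show ?thesis using assms(3) gwordprod_zero by metis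
  qed
  then show "geval \<phi> f C = geval (\<phi> \<circ> scale_gvar d) (descale d f) C"
    by (simp add: geval_def sum_fsupp_descale[OF assms(1,2)] gwordprod_map)
qed

lemma ghomog_scaled_not_dvd:
  assumes "ghomog (\<lambda>i. d * \<delta> i) m x" and "\<not> d dvd m"
  shows "x = (\<lambda>_. 0)"
proof
  fix A
  have "d dvd (\<Sum>i\<in>A. d * \<delta> i)" by (simp add: dvd_sum)
  with assms show "x A = 0" unfolding ghomog_def by metis
qed

lemma ghomog_scaled:
  assumes "d \<noteq> 0"
  shows "ghomog (\<lambda>i. d * \<delta> i) (d * n) x \<longleftrightarrow> ghomog \<delta> n x"
  using assms by (simp add: ghomog_def sum_distrib_left[symmetric])

lemma TZ_E_scaled:
  assumes "d \<noteq> 0"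
  shows "TZ_E (\<lambda>i. d * \<delta> i) = {f :: 'a::comm_ring_1 fpoly. ffin f \<and> descale d f \<in> TZ_E \<delta>}"
proof (intro set_eqI iffI)
  fix f :: "'a fpoly"
  assume f: "f \<in> TZ_E (\<lambda>i. d * \<delta> i)"
  then have fin: "ffin f" by (simp add: TZ_E_iff)
  have "geval \<psi> (descale d f) = (\<lambda>_. 0)" if \<psi>: "graded_assignment \<delta> \<psi>" for \<psi>
  proof -
    define \<phi> where "\<phi> x = (if d dvd snd x then \<psi> (unscale_gvar d x) else (\<lambda>_. 0))" for x
    have "grass_elem (\<phi> x) \<and> ghomog (\<lambda>i. d * \<delta> i) (snd x) (\<phi> x)" for x
    proof (cases "d dvd snd x")
      case True
      have "grass_elem (\<psi> (unscale_gvar d x))" and hom: "ghomog \<delta> (snd x div d) (\<psi> (unscale_gvar d x))"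
        using \<psi> unfolding graded_assignment_def by (metis snd_unscale_gvar)+
      moreover have "ghomog (\<lambda>i. d * \<delta> i) (snd x) (\<psi> (unscale_gvar d x))"
        using ghomog_scaled[OF assms, of \<delta> "snd x div d"] hom True by (metis dvd_mult_div_cancel)
      ultimately show ?thesis using True by (simp add: \<phi>_def)
    next
      case False
      then show ?thesis by (simp add: \<phi>_def grass_elem_def ghomog_def)
    qed
    then have "graded_assignment (\<lambda>i. d * \<delta> i) \<phi>" by (simp add: graded_assignment_def)
    then have "geval \<phi> f = (\<lambda>_. 0)" using f by (simp add: TZ_E_iff)
    moreover have "geval \<phi> f = geval \<psi> (descale d f)"
      using geval_descale[OF assms fin, of \<phi>] assms by (simp add: \<phi>_def comp_def)
    ultimately show ?thesis by simp
  qed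
  then show "f \<in> {f. ffin f \<and> descale d f \<in> TZ_E \<delta>}"
    using fin assms by (simp add: TZ_E_iff ffin_descale)
next
  fix f :: "'a fpoly"
  assume f: "f \<in> {f. ffin f \<and> descale d f \<in> TZ_E \<delta>}"
  have "geval \<phi> f = (\<lambda>_. 0)" if \<phi>: "graded_assignment (\<lambda>i. d * \<delta> i) \<phi>" for \<phi>
  proof -
    have "\<phi> x = (\<lambda>_. 0)" if "\<not> d dvd snd x" for x
      using \<phi> that ghomog_scaled_not_dvd by (metis graded_assignment_def)
    then have "geval \<phi> f = geval (\<phi> \<circ> scale_gvar d) (descale d f)"
      using f by (intro geval_descale[OF assms]) auto
    moreover have "graded_assignment \<delta> (\<phi> \<circ> scale_gvar d)"
      using \<phi> ghomog_scaled[OF assms] unfolding graded_assignment_def by (metis comp_def snd_scale_gvar)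
    ultimately show ?thesis using f by (simp add: TZ_E_iff)
  qed
  then show "f \<in> TZ_E (\<lambda>i. d * \<delta> i)" using f by (simp add: TZ_E_iff)
qed

section \<open>Relabelling the generators of the Grassmann algebra\<close>

definition inversions :: "(nat \<Rightarrow> nat) \<Rightarrow> nat set \<Rightarrow> (nat \<times> nat) set" where
  "inversions \<tau> A = {(p, q). p \<in> A \<and> q \<in> A \<and> p < q \<and> \<tau> q < \<tau> p}"

definition relabel_sign :: "(nat \<Rightarrow> nat) \<Rightarrow> nat set \<Rightarrow> 'a::comm_ring_1" where
  "relabel_sign \<tau> A = (-1) ^ card (inversions \<tau> A)"

text \<open>The automorphism of \<open>E\<close> induced by \<open>e\<^sub>i \<mapsto> e\<^sub>\<tau>\<^sub>i\<close>: reordering the factors of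
  \<open>e\<^sub>\<tau>\<^sub>i\<^sub>1 \<cdots> e\<^sub>\<tau>\<^sub>i\<^sub>k\<close> increasingly costs the sign of \<open>\<tau>\<close> on \<open>{i\<^sub>1, \<dots>, i\<^sub>k}\<close>.\<close>
definition grelabel :: "(nat \<Rightarrow> nat) \<Rightarrow> 'a::comm_ring_1 grass \<Rightarrow> 'a grass" where
  "grelabel \<tau> x = (\<lambda>B. relabel_sign \<tau> (\<tau> -` B) * x (\<tau> -` B))"

lemma card_inversions_Un:
  assumes "finite A" and "finite B" and "A \<inter> B = {}" and "inj \<tau>"
  shows "card (inversions \<tau> (A \<union> B)) + card {(p, q). p \<in> A \<and> q \<in> B \<and> q < p}
       = card (inversions \<tau> A) + card (inversions \<tau> B) + card {(p, q). p \<in> A \<and> q \<in> B \<and> \<tau> q < \<tau> p}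
         + 2 * card {(p, q). p \<in> A \<and> q \<in> B \<and> q < p \<and> \<tau> p < \<tau> q}"
proof -
  define X1 where "X1 = {(p, q). p \<in> A \<and> q \<in> B \<and> p < q \<and> \<tau> q < \<tau> p}"
  define X2 where "X2 = {(p, q). p \<in> B \<and> q \<in> A \<and> p < q \<and> \<tau> q < \<tau> p}"
  define X2' where "X2' = {(p, q). p \<in> A \<and> q \<in> B \<and> q < p \<and> \<tau> p < \<tau> q}"
  define Z where "Z = {(p, q). p \<in> A \<and> q \<in> B \<and> q < p \<and> \<tau> q < \<tau> p}"
  have fin: "finite (A \<times> B)" "finite (B \<times> A)" "finite (A \<times> A)" "finite (B \<times> B)"
    using assms by auto
  have fin_X1: "finite X1" by (rule finite_subset[OF _ fin(1)]) (auto simp: X1_def)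
  have fin_X2: "finite X2" by (rule finite_subset[OF _ fin(2)]) (auto simp: X2_def)
  have fin_X2': "finite X2'" by (rule finite_subset[OF _ fin(1)]) (auto simp: X2'_def)
  have fin_Z: "finite Z" by (rule finite_subset[OF _ fin(1)]) (auto simp: Z_def)
  have fin_A: "finite (inversions \<tau> A)" by (rule finite_subset[OF _ fin(3)]) (auto simp: inversions_def)
  have fin_B: "finite (inversions \<tau> B)" by (rule finite_subset[OF _ fin(4)]) (auto simp: inversions_def)
  have neq: "p \<noteq> q" "\<tau> p \<noteq> \<tau> q" if "p \<in> A" "q \<in> B" for p q
    using that assms(3,4) by (auto dest: injD)
  have "inversions \<tau> (A \<union> B) = ((inversions \<tau> A \<union> inversions \<tau> B) \<union> X1) \<union> X2"
    by (auto simp: inversions_def X1_def X2_def)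
  moreover have "(inversions \<tau> A \<union> inversions \<tau> B \<union> X1) \<inter> X2 = {}"
    "(inversions \<tau> A \<union> inversions \<tau> B) \<inter> X1 = {}" "inversions \<tau> A \<inter> inversions \<tau> B = {}"
    using assms(3) by (auto simp: inversions_def X1_def X2_def)
  ultimately have "card (inversions \<tau> (A \<union> B))
      = card (inversions \<tau> A) + card (inversions \<tau> B) + card X1 + card X2"
    using fin_A fin_B fin_X1 fin_X2 by (simp add: card_Un_disjoint)
  moreover have "card X2 = card X2'"
  proof -
    have "X2 = (\<lambda>(p, q). (q, p)) ` X2'" by (auto simp: X2_def X2'_def image_iff)
    moreover have "inj_on (\<lambda>(p, q). (q, p)) X2'" by (auto simp: inj_on_def)
    ultimately show ?thesis by (simp add: card_image)
  qed
  moreover have "{(p, q). p \<in> A \<and> q \<in> B \<and> q < p} = X2' \<union> Z"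
    using neq(2) by (auto simp: X2'_def Z_def neq_iff)
  moreover have "X2' \<inter> Z = {}" by (auto simp: X2'_def Z_def)
  moreover have "{(p, q). p \<in> A \<and> q \<in> B \<and> \<tau> q < \<tau> p} = X1 \<union> Z"
    using neq(1) by (auto simp: X1_def Z_def neq_iff)
  moreover have "X1 \<inter> Z = {}" by (auto simp: X1_def Z_def)
  ultimately show ?thesis
    unfolding X2'_def[symmetric] using fin_X1 fin_X2' fin_Z by (simp add: card_Un_disjoint)
qed

lemma relabel_sign_Un:
  assumes "finite A" and "finite B" and "A \<inter> B = {}" and "inj \<tau>"
  shows "relabel_sign \<tau> (A \<union> B) * gsign A B
       = gsign (\<tau> ` A) (\<tau> ` B) * relabel_sign \<tau> A * (relabel_sign \<tau> B :: 'a::comm_ring_1)"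
proof -
  have "{(p, q). p \<in> \<tau> ` A \<and> q \<in> \<tau> ` B \<and> q < p}
      = map_prod \<tau> \<tau> ` {(p, q). p \<in> A \<and> q \<in> B \<and> \<tau> q < \<tau> p}"
    by auto
  moreover have "inj (map_prod \<tau> \<tau>)" using assms(4) by (simp add: prod.inj_map)
  ultimately have "gsign (\<tau> ` A) (\<tau> ` B) = ((-1::'a) ^ card {(p, q). p \<in> A \<and> q \<in> B \<and> \<tau> q < \<tau> p})"
    unfolding gsign_def by (simp add: card_image inj_on_subset)
  then show ?thesis
    using card_inversions_Un[OF assms]
    by (simp add: relabel_sign_def gsign_def power_add[symmetric])
       (simp add: power_add power_mult algebra_simps)
qed

lemma relabel_sign_square: "relabel_sign \<tau> A * relabel_sign \<tau> A = (1::'a::comm_ring_1)"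
  by (simp add: relabel_sign_def power_mult_distrib[symmetric])

lemma grelabel_gmult:
  fixes x y :: "'a::comm_ring_1 grass"
  assumes "bij \<tau>"
  shows "grelabel \<tau> (gmult x y) = gmult (grelabel \<tau> x) (grelabel \<tau> y)"
proof
  fix C
  have inj: "inj \<tau>" and surj: "surj \<tau>" using assms by (auto simp: bij_def)
  define A0 where "A0 = \<tau> -` C"
  have C: "C = \<tau> ` A0" unfolding A0_def using surj by (simp add: surj_image_vimage_eq)
  show "grelabel \<tau> (gmult x y) C = gmult (grelabel \<tau> x) (grelabel \<tau> y) C"
  proof (cases "finite C")
    case False
    then have "infinite A0" using C by auto
    with False show ?thesis by (simp add: grelabel_def gmult_def A0_def[symmetric])
  next
    case True
    then have fin: "finite A0" unfolding A0_def using inj by (simp add: finite_vimageI)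
    have "gmult (grelabel \<tau> x) (grelabel \<tau> y) C
        = (\<Sum>A\<in>Pow A0. gsign (\<tau> ` A) (\<tau> ` (A0 - A)) * grelabel \<tau> x (\<tau> ` A) * grelabel \<tau> y (\<tau> ` (A0 - A)))"
    proof -
      have "Pow C = image \<tau> ` Pow A0" using C by (simp add: image_Pow_surj)
      moreover have "inj_on (image \<tau>) (Pow A0)" using inj by (meson inj_on_image_Pow inj_on_subset subset_UNIV)
      ultimately show ?thesis using True inj by (simp add: gmult_def sum.reindex C image_set_diff)
    qed
    also have "\<dots> = (\<Sum>A\<in>Pow A0. relabel_sign \<tau> A0 * (gsign A (A0 - A) * x A * y (A0 - A)))"
    proof (rule sum.cong[OF refl])
      fix A assume "A \<in> Pow A0"
      then have "finite A" "finite (A0 - A)" "A \<union> (A0 - A) = A0" using fin by (auto intro: finite_subset)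
      then have sign: "relabel_sign \<tau> A0 * gsign A (A0 - A)
          = gsign (\<tau> ` A) (\<tau> ` (A0 - A)) * relabel_sign \<tau> A * (relabel_sign \<tau> (A0 - A) :: 'a)"
        using relabel_sign_Un[of A "A0 - A" \<tau>] inj by auto
      have "gsign (\<tau> ` A) (\<tau> ` (A0 - A)) * grelabel \<tau> x (\<tau> ` A) * grelabel \<tau> y (\<tau> ` (A0 - A))
          = (gsign (\<tau> ` A) (\<tau> ` (A0 - A)) * relabel_sign \<tau> A * relabel_sign \<tau> (A0 - A)) * (x A * y (A0 - A))"
        using inj by (simp add: grelabel_def inj_vimage_image_eq algebra_simps)
      also have "\<dots> = relabel_sign \<tau> A0 * (gsign A (A0 - A) * x A * y (A0 - A))"
        unfolding sign[symmetric] by (simp add: algebra_simps)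
      finally show "gsign (\<tau> ` A) (\<tau> ` (A0 - A)) * grelabel \<tau> x (\<tau> ` A) * grelabel \<tau> y (\<tau> ` (A0 - A))
          = relabel_sign \<tau> A0 * (gsign A (A0 - A) * x A * y (A0 - A))" .
    qed
    also have "\<dots> = grelabel \<tau> (gmult x y) C"
      using fin by (simp add: grelabel_def gmult_def A0_def[symmetric] sum_distrib_left)
    finally show ?thesis ..
  qed
qed

lemma grelabel_gone:
  assumes "bij \<tau>"
  shows "grelabel \<tau> gone = (gone :: 'a::comm_ring_1 grass)"
proof
  fix B
  have "\<tau> -` B = {} \<longleftrightarrow> B = {}"
    using bij_is_surj[OF assms] by (metis surj_image_vimage_eq image_empty vimage_empty)
  then show "grelabel \<tau> gone B = (gone B :: 'a)"
    by (auto simp: grelabel_def gone_def relabel_sign_def inversions_def)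
qed

lemma grelabel_geval:
  fixes f :: "'a::comm_ring_1 fpoly"
  assumes "bij \<tau>"
  shows "grelabel \<tau> (geval \<phi> f) = geval (\<lambda>x. grelabel \<tau> (\<phi> x)) f"
proof -
  have wordprod: "grelabel \<tau> (gwordprod \<phi> w) = gwordprod (\<lambda>x. grelabel \<tau> (\<phi> x)) w" for w
    by (induction w) (simp_all add: gwordprod_def grelabel_gone[OF assms] grelabel_gmult[OF assms])
  show ?thesis
  proof
    fix B
    have "grelabel \<tau> (geval \<phi> f) B = (\<Sum>w\<in>fsupp f. f w * grelabel \<tau> (gwordprod \<phi> w) B)"
      by (simp add: grelabel_def geval_def sum_distrib_left mult.left_commute)
    also have "\<dots> = geval (\<lambda>x. grelabel \<tau> (\<phi> x)) f B"
      by (simp add: wordprod geval_def)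
    finally show "grelabel \<tau> (geval \<phi> f) B = geval (\<lambda>x. grelabel \<tau> (\<phi> x)) f B" .
  qed
qed

lemma grelabel_eq_zero_iff:
  assumes "bij \<tau>"
  shows "grelabel \<tau> x = (\<lambda>_. 0) \<longleftrightarrow> x = (\<lambda>_. 0::'a::comm_ring_1)"
proof
  assume x: "grelabel \<tau> x = (\<lambda>_. 0)"
  show "x = (\<lambda>_. 0)"
  proof
    fix A
    have "relabel_sign \<tau> A * x A = 0"
      using fun_cong[OF x, of "\<tau> ` A"] bij_is_inj[OF assms] by (simp add: grelabel_def inj_vimage_image_eq)
    then have "relabel_sign \<tau> A * (relabel_sign \<tau> A * x A) = 0" by simp
    then show "x A = 0" by (simp add: mult.assoc[symmetric] relabel_sign_square)
  qed
qed (simp add: grelabel_def)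

lemma grass_elem_grelabel:
  assumes "bij \<tau>" and "grass_elem x"
  shows "grass_elem (grelabel \<tau> x)"
proof -
  have image_vimage: "B = \<tau> ` (\<tau> -` B)" for B
    using bij_is_surj[OF assms(1)] by (simp add: surj_image_vimage_eq)
  have nonzero: "x (\<tau> -` B) \<noteq> 0" if "grelabel \<tau> x B \<noteq> 0" for B
    using that by (auto simp: grelabel_def)
  have "{B. grelabel \<tau> x B \<noteq> 0} \<subseteq> image \<tau> ` {A. x A \<noteq> 0}"
    using image_vimage nonzero by blast
  moreover have "finite B" if "grelabel \<tau> x B \<noteq> 0" for B
    using nonzero[OF that] assms(2) image_vimage[of B] by (metis finite_imageI grass_elem_def)
  ultimately show ?thesis
    using assms(2) by (auto simp: grass_elem_def intro: finite_subset)
qed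

lemma ghomog_grelabel:
  assumes "bij \<tau>" and "ghomog (\<delta> \<circ> \<tau>) n x"
  shows "ghomog \<delta> n (grelabel \<tau> x)"
  unfolding ghomog_def
proof (intro allI impI)
  fix B assume "grelabel \<tau> x B \<noteq> 0"
  then have "x (\<tau> -` B) \<noteq> 0" by (auto simp: grelabel_def)
  then have "(\<Sum>i\<in>\<tau> -` B. \<delta> (\<tau> i)) = n" using assms(2) by (simp add: ghomog_def)
  moreover have "(\<Sum>j\<in>B. \<delta> j) = (\<Sum>i\<in>\<tau> -` B. \<delta> (\<tau> i))"
    using assms(1) by (metis bij_is_inj bij_is_surj inj_on_subset subset_UNIV sum.reindex_cong
        surj_image_vimage_eq)
  ultimately show "(\<Sum>j\<in>B. \<delta> j) = n" by simp
qed

lemma TZ_E_subset_relabel: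
  assumes "bij \<sigma>"
  shows "TZ_E deg \<subseteq> TZ_E (deg \<circ> \<sigma>)"
proof
  fix f assume f: "f \<in> TZ_E deg"
  have "geval \<phi> f = (\<lambda>_. 0)" if \<phi>: "graded_assignment (deg \<circ> \<sigma>) \<phi>" for \<phi>
  proof -
    have "graded_assignment deg (\<lambda>x. grelabel \<sigma> (\<phi> x))"
      using \<phi> assms by (simp add: graded_assignment_def grass_elem_grelabel ghomog_grelabel)
    then have "grelabel \<sigma> (geval \<phi> f) = (\<lambda>_. 0)"
      using f by (simp add: TZ_E_iff grelabel_geval[OF assms])
    then show ?thesis by (simp add: grelabel_eq_zero_iff[OF assms])
  qed
  then show "f \<in> TZ_E (deg \<circ> \<sigma>)" using f by (simp add: TZ_E_iff)
qed

lemma TZ_E_relabel: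
  assumes "bij \<sigma>"
  shows "TZ_E (deg \<circ> \<sigma>) = TZ_E deg"
proof
  have "TZ_E (deg \<circ> \<sigma>) \<subseteq> TZ_E (deg \<circ> \<sigma> \<circ> inv \<sigma>)"
    using assms by (intro TZ_E_subset_relabel) (simp add: bij_imp_bij_inv)
  also have "deg \<circ> \<sigma> \<circ> inv \<sigma> = deg"
    using bij_is_surj[OF assms] by (simp add: comp_assoc surj_iff)
  finally show "TZ_E (deg \<circ> \<sigma>) \<subseteq> TZ_E deg" .
qed (rule TZ_E_subset_relabel[OF assms])


lemma ecard_eq_imp_bij_betw:
  fixes A B :: "nat set"
  assumes "ecard A = ecard B"
  shows "\<exists>f. bij_betw f A B"
proof (cases "finite A")
  case True
  then have "finite B" "card A = card B" using assms by (auto simp: ecard_def split: if_splits)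
  with True show ?thesis using finite_same_card_bij by blast
next
  case False
  then have "infinite B" using assms by (auto simp: ecard_def split: if_splits)
  obtain g where g: "bij_betw g (UNIV :: nat set) A"
    using countable_infiniteE'[OF countableI_type False] by blast
  obtain h where h: "bij_betw h (UNIV :: nat set) B"
    using countable_infiniteE'[OF countableI_type \<open>infinite B\<close>] by blast
  have "bij_betw (h \<circ> inv_into UNIV g) A B"
    by (rule bij_betw_trans[OF bij_betw_inv_into[OF g] h])
  then show ?thesis by blast
qed

lemma bij_of_equal_fibres:
  fixes f g :: "nat \<Rightarrow> 'c"
  assumes "\<And>y. ecard (f -` {y}) = ecard (g -` {y})"
  shows "\<exists>h. bij h \<and> g \<circ> h = f"
proof -
  have "\<forall>y. \<exists>H. bij_betw H (f -` {y}) (g -` {y})"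
    using assms ecard_eq_imp_bij_betw by blast
  then obtain H where H: "\<And>y. bij_betw (H y) (f -` {y}) (g -` {y})" by metis
  define h where "h x = H (f x) x" for x
  have g_h: "g (h x) = f x" for x
    using bij_betwE[OF H[of "f x"]] by (simp add: h_def)
  have "inj h"
  proof
    fix x x' assume "h x = h x'"
    moreover from this have "f x = f x'" using g_h by metis
    ultimately show "x = x'"
      using bij_betw_imp_inj_on[OF H[of "f x"]] by (simp add: h_def inj_on_def)
  qed
  moreover have "surj h"
  proof -
    have "z \<in> range h" for z
    proof -
      have "z \<in> H (g z) ` (f -` {g z})" using bij_betw_imp_surj_on[OF H[of "g z"]] by simp
      then obtain x where "f x = g z" "z = H (g z) x" by blast
      then have "h x = z" by (simp add: h_def)
      then show ?thesis by (metis rangeI)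
    qed
    then show ?thesis by blast
  qed
  moreover have "g \<circ> h = f" using g_h by auto
  ultimately show ?thesis by (auto simp: bij_def)
qed

lemma split_grading_relabel_scaled:
  assumes "is_split_grading deg (map ((*) d) rs) vs" and "is_split_grading deg' rs vs" and "d \<noteq> 0"
  shows "\<exists>\<sigma>. bij \<sigma> \<and> deg \<circ> \<sigma> = (\<lambda>i. d * deg' i)"
proof -
  have "ecard ((\<lambda>i. d * deg' i) -` {v}) = ecard (deg -` {v})" for v
  proof (cases "v \<in> set (map ((*) d) rs)")
    case True
    then obtain j where j: "j < length rs" "v = d * rs ! j" by (auto simp: in_set_conv_nth)
    then have "(\<lambda>i. d * deg' i) -` {v} = {i. deg' i = rs ! j}" "deg -` {v} = {i. deg i = map ((*) d) rs ! j}"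
      using assms(3) by auto
    with assms(1,2) j(1) show ?thesis by (simp add: is_split_grading_def)
  next
    case False
    then have "deg -` {v} = {}" "(\<lambda>i. d * deg' i) -` {v} = {}"
      using assms(1,2) by (auto simp: is_split_grading_def)
    then show ?thesis by simp
  qed
  then show ?thesis using bij_of_equal_fibres[of "\<lambda>i. d * deg' i" deg] by metis
qed

text \<open>Only \<open>a > 0\<close> (so that \<open>d \<noteq> 0\<close>) is used: the remaining numerical hypotheses do not
  enter this reduction.\<close>
theorem corollary5p6:
  fixes a b c :: int and k :: enat
    and deg deg' :: "nat \<Rightarrow> int"
    and S :: "'a::field_char_0 fpoly set"
  assumes "a > 0" and "b > 0" and "- b < c" and "c < a"
    and "k \<ge> enat (nat (gcd (a div gcd a (gcd b c)) (b div gcd a (gcd b c)) - 1))"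
    and "is_split_grading deg [- b, c, a] [\<infinity>, k, \<infinity>]"
    and "is_split_grading deg'
           [- (b div gcd a (gcd b c)), c div gcd a (gcd b c), a div gcd a (gcd b c)] [\<infinity>, k, \<infinity>]"
    and "TZ_gen S = TZ_E deg'"
  shows "TZ_gen ((\<lambda>f. Psi (gcd a (gcd b c)) (Phi (gcd a (gcd b c)) f)) ` S
            \<union> {fvar (i, m) | i m. \<not> (gcd a (gcd b c)) dvd m}) = TZ_E deg"
proof -
  define d where "d = gcd a (gcd b c)"
  have "d \<noteq> 0" using \<open>a > 0\<close> by (simp add: d_def)
  have "d dvd a" "d dvd b" "d dvd c"
    unfolding d_def by (meson gcd_dvd1 gcd_dvd2 dvd_trans)+
  then have degrees: "map ((*) d) [- (b div d), c div d, a div d] = [- b, c, a]" by simp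
  obtain \<sigma> where "bij \<sigma>" and \<sigma>: "deg \<circ> \<sigma> = (\<lambda>i. d * deg' i)"
    using split_grading_relabel_scaled[OF assms(6)[folded degrees] assms(7)[folded d_def] \<open>d \<noteq> 0\<close>]
    by blast
  have "S \<subseteq> {f. ffin f}"
    using TZ_gen_superset[of S] assms(8) by (auto simp: TZ_E_def)
  then have "TZ_gen (Phi d ` S \<union> {fvar (i, m) | i m. \<not> d dvd m}) = {f. ffin f \<and> descale d f \<in> TZ_gen S}"
    by (rule TZ_gen_Phi_image[OF \<open>d \<noteq> 0\<close>])
  also have "\<dots> = TZ_E (\<lambda>i. d * deg' i)"
    unfolding TZ_E_scaled[OF \<open>d \<noteq> 0\<close>] assms(8) ..
  also have "\<dots> = TZ_E deg"
    unfolding \<sigma>[symmetric] by (rule TZ_E_relabel[OF \<open>bij \<sigma>\<close>])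
  finally show ?thesis unfolding Psi_def d_def .
qed

end
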